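(* Let $H$ be a finite graph with at least two connected components, and let its vertices be numbered $1,\dots,n$ in the order in which they appear in the canonical adjacency matrix of $H$. Let $A$ be the component containing vertex $1$. Then the vertices of $A$ are exactly $1,2,\dots,|A|$, i.e. all vertices of $A$ appear before all other vertices.
   Context: For an $n\times n$ adjacency matrix $\mathbf{M}$ of a finite simple graph (with respect to some ordering of its vertices), its bit-string is obtained by concatenating the entries strictly above the diagonal column by column, left to right, reading each column from top to bottom. The canonical adjacency matrix of a graph $G$ is the unique adjacency matrix of $G$ (over all orderings of its vertices) whose bit-string is lexicographically greatest. *)

theory Defs
  imports Main
begin

definition simple_graph :: "'a set \<Rightarrow> ('a \<Rightarrow> 'a \<Rightarrow> bool) \<Rightarrow> bool" where
  "simple_graph V E \<longleftrightarrow> finite V \<and> (\<forall>x y. E x y \<longrightarrow> x \<in> V \<and> y \<in> V)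
     \<and> (\<forall>x y. E x y \<longrightarrow> E y x) \<and> (\<forall>x. \<not> E x x)"

definition component :: "'a set \<Rightarrow> ('a \<Rightarrow> 'a \<Rightarrow> bool) \<Rightarrow> 'a \<Rightarrow> 'a set" where
  "component V E v = {w \<in> V. (\<lambda>x y. E x y \<and> x \<in> V \<and> y \<in> V)\<^sup>*\<^sup>* v w}"

definition components :: "'a set \<Rightarrow> ('a \<Rightarrow> 'a \<Rightarrow> bool) \<Rightarrow> 'a set set" where
  "components V E = component V E ` V"

text \<open>An ordering of V: a bijection from positions {0..<card V} onto V.
  Position i (0-based) corresponds to vertex number i+1 in the paper.\<close>
definition ordering :: "'a set \<Rightarrow> (nat \<Rightarrow> 'a) \<Rightarrow> bool" where
  "ordering V \<sigma> \<longleftrightarrow> bij_betw \<sigma> {0..<card V} V"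

definition adj_matrix :: "('a \<Rightarrow> 'a \<Rightarrow> bool) \<Rightarrow> (nat \<Rightarrow> 'a) \<Rightarrow> nat \<Rightarrow> nat \<Rightarrow> bool" where
  "adj_matrix E \<sigma> i j = E (\<sigma> i) (\<sigma> j)"

definition bit_string :: "nat \<Rightarrow> (nat \<Rightarrow> nat \<Rightarrow> bool) \<Rightarrow> bool list" where
  "bit_string n M = concat (map (\<lambda>j. map (\<lambda>i. M i j) [0..<j]) [0..<n])"

definition lex_le :: "bool list \<Rightarrow> bool list \<Rightarrow> bool" where
  "lex_le xs ys \<longleftrightarrow> xs = ys \<or> (xs, ys) \<in> lexord {(False, True)}"

definition canonical_ordering :: "'a set \<Rightarrow> ('a \<Rightarrow> 'a \<Rightarrow> bool) \<Rightarrow> (nat \<Rightarrow> 'a) \<Rightarrow> bool" where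
  "canonical_ordering V E \<sigma> \<longleftrightarrow> ordering V \<sigma> \<and>
     (\<forall>\<tau>. ordering V \<tau> \<longrightarrow>
        lex_le (bit_string (card V) (adj_matrix E \<tau>)) (bit_string (card V) (adj_matrix E \<sigma>)))"

end

theory Submission
  imports Defs "HOL-Combinatorics.Permutations"
begin

(* A canonical ordering is greedy: if the vertex at position j is
   not adjacent to any of the earlier vertices, then no later vertex is adjacent to them
   either.  Otherwise swapping position j with such a later vertex leaves the columns
   before j of the adjacency matrix unchanged and turns the all-zero column j into a
   column containing a one, giving a lexicographically greater bit-string.
   Now let C be the component of the first vertex and j the first position whose vertex
   is not in C.  The earlier vertices lie in C, so the vertex at j has no neighbour among
   them, and by greediness no later vertex has one either.  Hence no edge leaves the
   prefix of length j, and since C is connected, C is exactly that prefix. *)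

lemma lexord_zero_block_less:
  assumes "length c = length d" "set c \<subseteq> {False}" "True \<in> set d"
  shows "(A @ c @ R1, A @ d @ R2) \<in> lexord {(False, True)}"
proof -
  have "(c @ R1, d @ R2) \<in> lexord {(False, True)}"
    using assms
  proof (induction c arbitrary: d)
    case Nil
    then show ?case by simp
  next
    case (Cons x c)
    then obtain y d' where d: "d = y # d'" by (cases d) auto
    show ?case
      using Cons d by (cases y) auto
  qed
  then show ?thesis by (rule lexord_append_leftI)
qed

lemma lex_le_not_lexord_greater:
  assumes "lex_le xs ys"
  shows "(ys, xs) \<notin> lexord {(False, True)}"
proof
  assume greater: "(ys, xs) \<in> lexord {(False, True)}"
  have irrefl: "\<And>zs. (zs, zs) \<notin> lexord {(False, True)}"
    by (rule lexord_irreflexive) auto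
  have "trans {(False, True)}" by (auto simp: trans_def)
  then show False
    using assms greater irrefl unfolding lex_le_def by (metis lexord_trans)
qed

definition upper_column :: "(nat \<Rightarrow> nat \<Rightarrow> bool) \<Rightarrow> nat \<Rightarrow> bool list" where
  "upper_column M j = map (\<lambda>i. M i j) [0..<j]"

lemma bit_string_split:
  assumes "j < n"
  shows "bit_string n M = concat (map (upper_column M) [0..<j])
           @ upper_column M j @ concat (map (upper_column M) [Suc j..<n])"
proof -
  have "[0..<n] = [0..<j] @ j # [Suc j..<n]"
    using assms upt_add_eq_append[of 0 j "n - j"] upt_conv_Cons[of j n] by simp
  then show ?thesis unfolding bit_string_def upper_column_def by simp
qed

lemma rtranclp_leaves_set:
  assumes "R\<^sup>*\<^sup>* a b" "a \<in> S" "b \<notin> S"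
  shows "\<exists>x y. R x y \<and> x \<in> S \<and> y \<notin> S"
  using assms by (induction rule: rtranclp_induct) auto

lemma component_self:
  assumes "v \<in> V"
  shows "v \<in> component V E v"
  using assms unfolding component_def by auto

lemma component_subset: "component V E v \<subseteq> V"
  unfolding component_def by auto

lemma component_closed:
  assumes "simple_graph V E" "x \<in> component V E v" "E x y"
  shows "y \<in> component V E v"
proof -
  have "x \<in> V" "y \<in> V" using assms(1,3) unfolding simple_graph_def by auto
  then show ?thesis
    using assms(2,3) unfolding component_def by (auto intro: rtranclp.rtrancl_into_rtrancl)
qed

lemma component_edge_leaving:
  assumes "v \<in> S" "w \<in> component V E v" "w \<notin> S"
  shows "\<exists>x y. E x y \<and> x \<in> S \<and> y \<in> V \<and> y \<notin> S"
proof -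
  let ?R = "\<lambda>x y. E x y \<and> x \<in> V \<and> y \<in> V"
  have "?R\<^sup>*\<^sup>* v w" using assms(2) unfolding component_def by auto
  then show ?thesis using rtranclp_leaves_set[of ?R v w S] assms(1,3) by blast
qed

lemma ordering_swap:
  assumes "ordering V \<sigma>" "j < card V" "k < card V"
  shows "ordering V (\<sigma> \<circ> transpose j k)"
proof -
  have "transpose j k permutes {0..<card V}"
    using assms(2,3) by (intro permutes_swap_id) auto
  then show ?thesis
    using assms(1) unfolding ordering_def by (metis bij_betw_trans permutes_imp_bij)
qed

lemma canonical_greedy:
  assumes canon: "canonical_ordering V E \<sigma>"
    and jk: "j < k" "k < card V"
    and edge: "i < j" "E (\<sigma> i) (\<sigma> k)"
  shows "\<exists>i'<j. E (\<sigma> i') (\<sigma> j)"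
proof (rule ccontr)
  assume no_edge: "\<not> (\<exists>i'<j. E (\<sigma> i') (\<sigma> j))"
  define n where "n = card V"
  define \<tau> where "\<tau> = \<sigma> \<circ> transpose j k"
  have jn: "j < n" using jk unfolding n_def by simp
  have "ordering V \<tau>"
    using canon jk ordering_swap[of V \<sigma> j k] unfolding canonical_ordering_def \<tau>_def by simp
  then have le: "lex_le (bit_string n (adj_matrix E \<tau>)) (bit_string n (adj_matrix E \<sigma>))"
    using canon unfolding canonical_ordering_def n_def by blast
  have \<tau>_below: "\<And>i. i < j \<Longrightarrow> \<tau> i = \<sigma> i" and \<tau>_j: "\<tau> j = \<sigma> k"
    using jk unfolding \<tau>_def by auto
  have same_prefix: "map (upper_column (adj_matrix E \<tau>)) [0..<j]
                   = map (upper_column (adj_matrix E \<sigma>)) [0..<j]"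
    by (auto simp: upper_column_def adj_matrix_def \<tau>_below)
  have zero_column: "set (upper_column (adj_matrix E \<sigma>) j) \<subseteq> {False}"
    using no_edge by (auto simp: upper_column_def adj_matrix_def)
  have one_in_column: "True \<in> set (upper_column (adj_matrix E \<tau>) j)"
    using edge \<tau>_below \<tau>_j by (force simp: upper_column_def adj_matrix_def)
  have "(bit_string n (adj_matrix E \<sigma>), bit_string n (adj_matrix E \<tau>)) \<in> lexord {(False, True)}"
    unfolding bit_string_split[OF jn, of "adj_matrix E \<sigma>"]
      bit_string_split[OF jn, of "adj_matrix E \<tau>"] same_prefix
    by (rule lexord_zero_block_less[OF _ zero_column one_in_column]) (simp add: upper_column_def)
  then show False using lex_le_not_lexord_greater[OF le] by simp
qed

lemma canonical_component_first_gap: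
  assumes graph: "simple_graph V E" and canon: "canonical_ordering V E \<sigma>"
    and jn: "j < card V"
    and gap: "\<sigma> j \<notin> component V E (\<sigma> 0)"
    and before: "\<And>i. i < j \<Longrightarrow> \<sigma> i \<in> component V E (\<sigma> 0)"
  shows "component V E (\<sigma> 0) = \<sigma> ` {0..<j}"
proof
  show "\<sigma> ` {0..<j} \<subseteq> component V E (\<sigma> 0)" using before by auto
next
  let ?C = "component V E (\<sigma> 0)" and ?S = "\<sigma> ` {0..<j}"
  have bij: "bij_betw \<sigma> {0..<card V} V"
    using canon unfolding canonical_ordering_def ordering_def by simp
  have j_pos: "0 < j"
  proof (rule ccontr)
    assume "\<not> 0 < j"
    then have "\<sigma> 0 \<in> V" using jn bij by (auto simp: bij_betw_def)
    then show False using gap \<open>\<not> 0 < j\<close> component_self[of "\<sigma> 0" V E] by simp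
  qed
  show "?C \<subseteq> ?S"
  proof
    fix w assume "w \<in> ?C"
    show "w \<in> ?S"
    proof (rule ccontr)
      assume "w \<notin> ?S"
      moreover have "\<sigma> 0 \<in> ?S" using j_pos by auto
      ultimately obtain x y where xy: "E x y" "x \<in> ?S" "y \<in> V" "y \<notin> ?S"
        using component_edge_leaving[of "\<sigma> 0" ?S w V E] \<open>w \<in> ?C\<close> by blast
      obtain i where i: "i < j" "x = \<sigma> i" using xy(2) by auto
      obtain k where k: "k < card V" "y = \<sigma> k"
        using xy(3) bij unfolding bij_betw_def by (metis atLeastLessThan_iff imageE)
      have "y \<in> ?C" using component_closed[OF graph before[OF i(1)]] xy(1) i(2) by simp
      then have "k \<noteq> j" using gap k(2) by auto
      moreover have "\<not> k < j" using xy(4) k(2) by auto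
      ultimately have "j < k" by simp
      then obtain i' where "i' < j" "E (\<sigma> i') (\<sigma> j)"
        using canonical_greedy[OF canon \<open>j < k\<close> k(1) i(1)] xy(1) i(2) k(2) by blast
      then show False using component_closed[OF graph before] gap by blast
    qed
  qed
qed

lemma canonical_component_prefix:
  assumes graph: "simple_graph V E" and canon: "canonical_ordering V E \<sigma>"
  shows "\<exists>j\<le>card V. component V E (\<sigma> 0) = \<sigma> ` {0..<j}"
proof (cases "\<forall>i<card V. \<sigma> i \<in> component V E (\<sigma> 0)")
  case True
  have "\<sigma> ` {0..<card V} = V"
    using canon unfolding canonical_ordering_def ordering_def by (simp add: bij_betw_def)
  have "component V E (\<sigma> 0) = \<sigma> ` {0..<card V}"
  proof
    show "component V E (\<sigma> 0) \<subseteq> \<sigma> ` {0..<card V}"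
      using component_subset[of V E "\<sigma> 0"] \<open>\<sigma> ` {0..<card V} = V\<close> by simp
    show "\<sigma> ` {0..<card V} \<subseteq> component V E (\<sigma> 0)" using True by auto
  qed
  then show ?thesis by blast
next
  case False
  define j where "j = (LEAST j. j < card V \<and> \<sigma> j \<notin> component V E (\<sigma> 0))"
  have j: "j < card V" "\<sigma> j \<notin> component V E (\<sigma> 0)"
    using False LeastI_ex[of "\<lambda>j. j < card V \<and> \<sigma> j \<notin> component V E (\<sigma> 0)"]
    unfolding j_def by auto
  have "\<And>i. i < j \<Longrightarrow> \<sigma> i \<in> component V E (\<sigma> 0)"
    using not_less_Least[of _ "\<lambda>j. j < card V \<and> \<sigma> j \<notin> component V E (\<sigma> 0)"] j(1)
    unfolding j_def[symmetric] by force
  then show ?thesis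
    using canonical_component_first_gap[OF graph canon j] j(1) by (intro exI[of _ j]) simp
qed

text \<open>The main theorem: the prefix has length card C because orderings are injective.\<close>
theorem mainTheorem8:
  fixes V :: "'a set" and E :: "'a \<Rightarrow> 'a \<Rightarrow> bool" and \<sigma> :: "nat \<Rightarrow> 'a"
  assumes "simple_graph V E"
    and "card (components V E) \<ge> 2"
    and "canonical_ordering V E \<sigma>"
  shows "component V E (\<sigma> 0) = \<sigma> ` {0..<card (component V E (\<sigma> 0))}"
proof -
  obtain j where j: "j \<le> card V" and prefix: "component V E (\<sigma> 0) = \<sigma> ` {0..<j}"
    using canonical_component_prefix[OF assms(1,3)] by blast
  have "inj_on \<sigma> {0..<card V}"
    using assms(3) unfolding canonical_ordering_def ordering_def by (simp add: bij_betw_def)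
  moreover have "{0..<j} \<subseteq> {0..<card V}" using j by auto
  ultimately have "inj_on \<sigma> {0..<j}" by (rule inj_on_subset)
  then have "card (component V E (\<sigma> 0)) = j" unfolding prefix by (simp add: card_image)
  then show ?thesis using prefix by simp
qed

end
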